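(* Let $a\geq3$ be an odd integer, let $\alpha\in A_{a-2}$, $m\in\mathbb{N}$, and $k\in\{1,2,\dots,a^m-1\}$. Then there exists $N\in\mathbb{N}$ such that the sequence $\{\mathscr{O}_n((\tfrac{k}{a^m},0),\alpha)\}_{n=N}^\infty$, where $\mathscr{O}_n((\tfrac{k}{a^m},0),\alpha)$ is the orbit of the prefractal billiard table $\Omega(S_{a,n})$ with initial condition $((\tfrac{k}{a^m},0),\alpha)$, is a constant sequence of compatible closed orbits.
   Context: Let $Q=[0,1]^2$. For odd $a\geq3$: $S_{a,0}=Q$, and $S_{a,n}$ is obtained from $S_{a,n-1}$ (a union of closed squares of side $a^{-(n-1)}$) by dividing each such square into $a^2$ subsquares of side $a^{-n}$ and removing the open middle one. A peripheral square is the boundary of a removed open square. $A_b=\{\tfrac pq: p+q\leq b,\ 0\leq p<q\leq b-1,\ p,q\in\mathbb{N}\cup\{0\},\ p+q \text{ odd}\}$ for odd $b\geq3$, with the convention $A_1=\{0\}$. The prefractal billiard table $\Omega(S_{a,n})$ is the region $S_{a,n}$ with boundary $\partial S_{a,n}$; the ball moves in straight lines and reflects with angle of reflection equal to angle of incidence. Reflection at corners of $Q$ is well defined (exit direction reflected through the angle bisector); if the ball hits a corner of a peripheral square the trajectory terminates (the orbit is singular). An initial condition $(x^0,\alpha)$ is a boundary point $x^0$ with inward direction of slope $\alpha$; its orbit is the sequence of successive collision points with outgoing directions. An orbit is closed if it consists of finitely many elements (this includes periodic orbits and singular orbits). Initial conditions $(x_n^0,\alpha)$ for $\Omega(S_{a,n})$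 and $(x_{n'}^0,\alpha)$ for $\Omega(S_{a,n'})$, $n>n'$, are compatible if $x_n^0,x_{n'}^0$ lie on a segment of direction $\alpha$ meeting $\partial S_{a,n}$ only at $x_n^0$; a sequence of orbits $\{\mathscr{O}_n\}_{n\geq N}$ with pairwise compatible initial conditions is a sequence of compatible orbits, a sequence of compatible closed orbits if every $\mathscr{O}_n$ is closed, and constant if the path traversed by $\mathscr{O}_{n+1}$ equals the path traversed by $\mathscr{O}_n$ for every $n\geq N$. *)

theory Defs
  imports "HOL-Analysis.Analysis"
begin

type_synonym pt = "real \<times> real"

definition mid :: "nat \<Rightarrow> nat" where
  "mid a = (a - 1) div 2"

text \<open>cells a n: integer coordinates (u,w) of the closed squares of side a^(-n)
  whose union is S_{a,n}; the square with index (u,w) is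
  [u/a^n,(u+1)/a^n] x [w/a^n,(w+1)/a^n].\<close>
fun cells :: "nat \<Rightarrow> nat \<Rightarrow> (nat \<times> nat) set" where
  "cells a 0 = {(0, 0)}"
| "cells a (Suc n) =
     {(a * u + i, a * w + l) | u w i l.
        (u, w) \<in> cells a n \<and> i < a \<and> l < a \<and> (i, l) \<noteq> (mid a, mid a)}"

definition cell_square :: "nat \<Rightarrow> nat \<Rightarrow> nat \<times> nat \<Rightarrow> pt set" where
  "cell_square a n c =
     {real (fst c) / real a ^ n .. (real (fst c) + 1) / real a ^ n} \<times>
     {real (snd c) / real a ^ n .. (real (snd c) + 1) / real a ^ n}"

text \<open>The prefractal S_{a,n} (a union of closed squares; equal to S_{a,n-1} with
  the open middle subsquares removed).\<close>
definition carpet :: "nat \<Rightarrow> nat \<Rightarrow> pt set" where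
  "carpet a n = (\<Union>c\<in>cells a n. cell_square a n c)"

text \<open>The open middle subsquare removed from the cell c of level j (when passing
  to level j+1): lower-left corner coordinates and side.\<close>
definition rm_lo :: "nat \<Rightarrow> nat \<Rightarrow> nat \<Rightarrow> real" where
  "rm_lo a j u = real (a * u + mid a) / real a ^ Suc j"

definition rm_side :: "nat \<Rightarrow> nat \<Rightarrow> real" where
  "rm_side a j = 1 / real a ^ Suc j"

definition removed_square :: "nat \<Rightarrow> nat \<Rightarrow> nat \<times> nat \<Rightarrow> pt set" where
  "removed_square a j c =
     {rm_lo a j (fst c) <..< rm_lo a j (fst c) + rm_side a j} \<times>
     {rm_lo a j (snd c) <..< rm_lo a j (snd c) + rm_side a j}"

definition peripheral_squares :: "nat \<Rightarrow> nat \<Rightarrow> pt set set" where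
  "peripheral_squares a n =
     {frontier (removed_square a j c) | j c. j < n \<and> c \<in> cells a j}"

definition peripheral_corners :: "nat \<Rightarrow> nat \<Rightarrow> pt set" where
  "peripheral_corners a n =
     (\<Union>{ {rm_lo a j (fst c), rm_lo a j (fst c) + rm_side a j} \<times>
          {rm_lo a j (snd c), rm_lo a j (snd c) + rm_side a j} | j c.
          j < n \<and> c \<in> cells a j })"

definition A_set :: "nat \<Rightarrow> real set" where
  "A_set b = (if b = 1 then {0} else
     {real p / real q | p q. p + q \<le> b \<and> p < q \<and> q \<le> b - 1 \<and> odd (p + q)})"

definition Q_corners :: "pt set" where
  "Q_corners = {(0,0), (0,1), (1,0), (1,1)}"

definition hit_time :: "pt set \<Rightarrow> pt set \<Rightarrow> pt \<Rightarrow> pt \<Rightarrow> real" where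
  "hit_time S C x v =
     Inf ({t. 0 < t \<and> x + t *\<^sub>R v \<notin> S} \<union> {t. 0 < t \<and> x + t *\<^sub>R v \<in> C})"

definition vertical_wall :: "pt set \<Rightarrow> pt \<Rightarrow> bool" where
  "vertical_wall S p \<longleftrightarrow>
     (\<exists>e>0. closed_segment p (p + (0, e)) \<subseteq> frontier S \<or>
            closed_segment p (p - (0, e)) \<subseteq> frontier S)"

text \<open>At a corner of Q the exit direction is the reflection of the
  reversed incoming direction through the angle bisector of that corner; at a
  point of a vertical (resp. horizontal) side the angle of reflection equals
  the angle of incidence.\<close>
definition reflect_dir :: "pt set \<Rightarrow> pt \<Rightarrow> pt \<Rightarrow> pt" where
  "reflect_dir S p v =
     (if p = (0,0) \<or> p = (1,1) then (- snd v, - fst v)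
      else if p = (1,0) \<or> p = (0,1) then (snd v, fst v)
      else if vertical_wall S p then (- fst v, snd v)
      else (fst v, - snd v))"

text \<open>When a corner of a peripheral
  square is hit the orbit terminates; we model this by letting the sequence
  stay constant from then on.\<close>
fun orbit_seq :: "nat \<Rightarrow> nat \<Rightarrow> pt \<Rightarrow> pt \<Rightarrow> nat \<Rightarrow> pt \<times> pt" where
  "orbit_seq a n x0 v0 0 = (x0, v0)"
| "orbit_seq a n x0 v0 (Suc j) =
     (let (x, v) = orbit_seq a n x0 v0 j in
      if x \<in> peripheral_corners a n then (x, v)
      else (let p = x + hit_time (carpet a n) (peripheral_corners a n) x v *\<^sub>R v
            in (p, reflect_dir (carpet a n) p v)))"

text \<open>Inward direction of slope alpha at a point of the bottom side of Q.\<close>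
definition dir :: "real \<Rightarrow> pt" where
  "dir \<alpha> = (1, \<alpha>)"

definition orbit :: "nat \<Rightarrow> nat \<Rightarrow> pt \<Rightarrow> real \<Rightarrow> (pt \<times> pt) set" where
  "orbit a n x0 \<alpha> = range (orbit_seq a n x0 (dir \<alpha>))"

definition closed_orbit :: "nat \<Rightarrow> nat \<Rightarrow> pt \<Rightarrow> real \<Rightarrow> bool" where
  "closed_orbit a n x0 \<alpha> \<longleftrightarrow> finite (orbit a n x0 \<alpha>)"

definition orbit_path :: "nat \<Rightarrow> nat \<Rightarrow> pt \<Rightarrow> real \<Rightarrow> pt set" where
  "orbit_path a n x0 \<alpha> =
     (\<Union>j. closed_segment (fst (orbit_seq a n x0 (dir \<alpha>) j))
                          (fst (orbit_seq a n x0 (dir \<alpha>) (Suc j))))"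

definition compatible :: "nat \<Rightarrow> nat \<Rightarrow> pt \<Rightarrow> pt \<Rightarrow> real \<Rightarrow> bool" where
  "compatible a n xn xn' \<alpha> \<longleftrightarrow>
     (\<exists>p q c. q - p = c *\<^sub>R dir \<alpha> \<and>
        xn \<in> closed_segment p q \<and> xn' \<in> closed_segment p q \<and>
        closed_segment p q \<inter> frontier (carpet a n) = {xn})"

definition compatible_closed_seq :: "nat \<Rightarrow> nat \<Rightarrow> (nat \<Rightarrow> pt) \<Rightarrow> real \<Rightarrow> bool" where
  "compatible_closed_seq a N x \<alpha> \<longleftrightarrow>
     (\<forall>n n'. N \<le> n' \<and> n' < n \<longrightarrow> compatible a n (x n) (x n') \<alpha>) \<and>
     (\<forall>n\<ge>N. closed_orbit a n (x n) \<alpha>)"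

definition constant_orbit_seq :: "nat \<Rightarrow> nat \<Rightarrow> (nat \<Rightarrow> pt) \<Rightarrow> real \<Rightarrow> bool" where
  "constant_orbit_seq a N x \<alpha> \<longleftrightarrow>
     (\<forall>n\<ge>N. orbit_path a (Suc n) (x (Suc n)) \<alpha> = orbit_path a n (x n) \<alpha>)"

end

theory Submission
  imports Defs
begin

text \<open>Write \<alpha> = p/q with p + q \<le> a - 2 and p + q odd, and call a line of slope
  \<plusminus>p/q or \<plusminus>q/p through a point of the grid (a^-m \<int>)^2 a grid line. A grid line never
  meets the closed middle square removed from a cell of level j \<ge> m: after scaling by
  a^(j+1) this would give q Y \<plusminus> p X \<equiv> 0 (mod a) with X, Y in [mid, mid + 1], which the
  parity of p + q rules out. Hence near every point of a grid line the tables S_{a,n}, n \<ge> m,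
  coincide with S_{a,m}, and a ball started at (k/a^m, 0) with slope \<alpha> follows the same
  path in all of them. The walls of S_{a,m} lie on grid lines, so reflections keep the ball
  on grid lines, and all collision points have coordinates in (1/K)\<int> for a fixed K; the
  orbit therefore takes only finitely many values.\<close>

section \<open>The prefractal carpets\<close>

lemma mid_bounds:
  assumes "odd a" "3 \<le> a"
  shows "a = 2 * mid a + 1" "1 \<le> mid a" "mid a + 1 < a"
  using assms unfolding mid_def by (auto elim!: oddE)

lemma cells_less_power:
  assumes "c \<in> cells a j" "1 \<le> a"
  shows "fst c < a ^ j \<and> snd c < a ^ j"
  using assms(1)
proof (induction j arbitrary: c)
  case (Suc j)
  then obtain u w i l where c: "c = (a*u+i, a*w+l)" "(u,w) \<in> cells a j" "i < a" "l < a" by auto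
  have "u < a^j" "w < a^j" using Suc.IH[OF c(2)] by auto
  then have "a*u + a \<le> a^Suc j" "a*w + a \<le> a^Suc j"
    by (metis Suc_leI add.commute mult_Suc_right mult_le_mono2 power_Suc)+
  then show ?case using c by auto
qed simp

lemma finite_cells:
  assumes "1 \<le> a"
  shows "finite (cells a j)"
proof -
  have "cells a j \<subseteq> {..<a^j} \<times> {..<a^j}" using cells_less_power[OF _ assms] by force
  then show ?thesis by (rule finite_subset) auto
qed

lemma swap_in_cells: "c \<in> cells a j \<Longrightarrow> prod.swap c \<in> cells a j"
proof (induction j arbitrary: c)
  case (Suc j)
  then obtain u w i l where c: "c = (a*u+i, a*w+l)" "(u,w) \<in> cells a j" "i < a" "l < a"
      "(i, l) \<noteq> (mid a, mid a)" by auto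
  have "(w, u) \<in> cells a j" using Suc.IH[OF c(2)] by simp
  then show ?case using c by auto
qed simp

lemma swap_cells: "prod.swap ` cells a j = cells a j"
  using swap_in_cells by (force simp: image_iff)

lemma swap_carpet: "prod.swap ` carpet a n = carpet a n"
proof -
  have "prod.swap ` cell_square a n c = cell_square a n (prod.swap c)" for c
    unfolding cell_square_def by (simp add: product_swap)
  then have "prod.swap ` carpet a n = (\<Union>c\<in>prod.swap ` cells a n. cell_square a n c)"
    unfolding carpet_def image_UN by simp
  then show ?thesis unfolding swap_cells carpet_def .
qed

definition middle_square :: "nat \<Rightarrow> nat \<Rightarrow> nat \<times> nat \<Rightarrow> pt set" where
  "middle_square a j c =
     {rm_lo a j (fst c) .. rm_lo a j (fst c) + rm_side a j} \<times>
     {rm_lo a j (snd c) .. rm_lo a j (snd c) + rm_side a j}"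

lemma closed_middle_square: "closed (middle_square a j c)"
  unfolding middle_square_def by (intro closed_Times closed_atLeastAtMost)

lemma swap_middle_square: "prod.swap z \<in> middle_square a j (prod.swap c) \<longleftrightarrow> z \<in> middle_square a j c"
  unfolding middle_square_def by (cases z) auto

lemma rm_lo_add_rm_side:
  "1 \<le> a \<Longrightarrow> rm_lo a j u + rm_side a j = real (a*u + mid a + 1) / real a ^ Suc j"
  unfolding rm_lo_def rm_side_def by (simp add: add_divide_distrib)

lemma rm_lo_pos:
  assumes "odd a" "3 \<le> a"
  shows "rm_lo a j u > 0"
proof -
  have "0 < a * u + mid a" using mid_bounds(2)[OF assms] by simp
  then have "0 < real (a * u + mid a)" by (simp only: of_nat_0_less_iff)
  then show ?thesis unfolding rm_lo_def using assms(2) by simp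
qed

lemma subcell_index:
  fixes x :: real
  assumes a: "1 \<le> a" and lo: "real u / real a ^ j \<le> x" and hi: "x \<le> (real u + 1) / real a ^ j"
  shows "\<exists>i<a. real (a*u+i) / real a ^ Suc j \<le> x \<and> x \<le> real (a*u+i+1) / real a ^ Suc j"
proof -
  define A where "A = real a ^ Suc j"
  have Apos: "A > 0" using a by (simp add: A_def)
  define y where "y = x * A - real (a*u)"
  have A': "A = real a * real a ^ j" by (simp add: A_def)
  have "real u \<le> x * real a ^ j" using lo a by (simp add: field_simps)
  then have y0: "0 \<le> y" unfolding y_def A' by (simp add: algebra_simps)
     (metis mult.assoc mult.commute mult_left_mono of_nat_0_le_iff)
  have "x * real a ^ j \<le> real u + 1" using hi a by (simp add: field_simps)
  then have "real a * (x * real a ^ j) \<le> real a * (real u + 1)" by (rule mult_left_mono) simp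
  then have ya: "y \<le> real a" unfolding y_def A' by (simp add: algebra_simps)
  show ?thesis
  proof (cases "y < real a")
    case True
    define i where "i = nat (floor y)"
    have fi: "real i \<le> y" "y < real i + 1" using y0 unfolding i_def by linarith+
    have "i < a" using fi True by linarith
    moreover have "real (a*u+i) \<le> x * A" "x * A \<le> real (a*u+i+1)" using fi unfolding y_def by auto
    ultimately show ?thesis using Apos unfolding A_def[symmetric]
      by (intro exI[of _ i]) (simp add: field_simps)
  next
    case False
    then have "x * A = real (a*u + (a-1) + 1)" using ya a unfolding y_def by simp
    then show ?thesis using Apos a unfolding A_def[symmetric]
      by (intro exI[of _ "a-1"]) (auto simp: field_simps)
  qed
qed

lemma carpet_Suc_subset:
  assumes "1 \<le> a"
  shows "carpet a (Suc j) \<subseteq> carpet a j"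
proof
  fix z assume "z \<in> carpet a (Suc j)"
  then obtain u w i l where c: "(u,w) \<in> cells a j" "i < a" "l < a"
      "z \<in> cell_square a (Suc j) (a*u+i, a*w+l)"
    unfolding carpet_def by auto
  have ap: "real a > 0" using assms by simp
  have lo: "real u / real a ^ j \<le> real (a*u+i) / real a ^ Suc j" for u i :: nat
    using ap by (simp add: field_simps)
  have hi: "(real (a*u+i) + 1) / real a ^ Suc j \<le> (real u + 1) / real a ^ j" if "i < a" for u i :: nat
  proof -
    have "real (a*u+i) + 1 \<le> real a * (real u + 1)" using that by (simp add: algebra_simps)
    then have "(real (a*u+i) + 1) / real a / real a ^ j \<le> (real u + 1) / real a ^ j"
      using ap by (intro divide_right_mono) (simp_all add: divide_le_eq algebra_simps)
    then show ?thesis by (simp add: divide_divide_eq_left mult.commute)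
  qed
  have "z \<in> cell_square a j (u,w)" using c(4) unfolding cell_square_def
    using lo[of u i] lo[of w l] hi[OF c(2), of u] hi[OF c(3), of w] by (auto simp del: of_nat_add)
  then show "z \<in> carpet a j" using c(1) unfolding carpet_def by auto
qed

lemma carpet_SucI:
  assumes "odd a" "3 \<le> a" "z \<in> carpet a j" "\<forall>c\<in>cells a j. z \<notin> middle_square a j c"
  shows "z \<in> carpet a (Suc j)"
proof -
  have a1: "1 \<le> a" using assms by simp
  obtain u w where c: "(u,w) \<in> cells a j" "z \<in> cell_square a j (u,w)"
    using assms(3) unfolding carpet_def by auto
  obtain i where i: "i<a" "real (a*u+i) / real a ^ Suc j \<le> fst z" "fst z \<le> real (a*u+i+1) / real a ^ Suc j"
    using subcell_index[OF a1, of u j "fst z"] c(2) unfolding cell_square_def by auto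
  obtain l where l: "l<a" "real (a*w+l) / real a ^ Suc j \<le> snd z" "snd z \<le> real (a*w+l+1) / real a ^ Suc j"
    using subcell_index[OF a1, of w j "snd z"] c(2) unfolding cell_square_def by auto
  have "(i,l) \<noteq> (mid a, mid a)"
  proof
    assume "(i,l) = (mid a, mid a)"
    then have "z \<in> middle_square a j (u,w)"
      using i l unfolding middle_square_def rm_lo_add_rm_side[OF a1] by (cases z) (auto simp: rm_lo_def)
    then show False using assms(4) c(1) by auto
  qed
  then have "(a*u+i, a*w+l) \<in> cells a (Suc j)" using c(1) i l by auto
  moreover have "z \<in> cell_square a (Suc j) (a*u+i, a*w+l)" using i l unfolding cell_square_def
    by (cases z) (simp add: add_ac)
  ultimately show ?thesis unfolding carpet_def by blast
qed

lemma carpet_0: "carpet a 0 = {0..1} \<times> {0..1}"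
  unfolding carpet_def cell_square_def by simp

lemma carpet_antimono:
  assumes "1 \<le> a" "m \<le> n"
  shows "carpet a n \<subseteq> carpet a m"
  using assms(2) carpet_Suc_subset[OF assms(1)] by (induction n rule: dec_induct) auto

lemma carpet_subset_unit_square: "1 \<le> a \<Longrightarrow> carpet a n \<subseteq> {0..1} \<times> {0..1}"
  using carpet_antimono[of a 0 n] carpet_0 by auto

lemma carpet_if_avoids_middle_squares:
  assumes "odd a" "3 \<le> a" "z \<in> carpet a m" "m \<le> n"
    "\<forall>j c. m \<le> j \<and> j < n \<and> c \<in> cells a j \<longrightarrow> z \<notin> middle_square a j c"
  shows "z \<in> carpet a n"
  using assms(4,5)
proof (induction n rule: dec_induct)
  case (step j)
  have "z \<in> carpet a j" using step.IH step.prems by simp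
  then show ?case using step.prems step.hyps by (intro carpet_SucI[OF assms(1,2)]) auto
qed (use assms(3) in simp)

lemma carpet_iff_if_avoids_middle_squares:
  assumes "odd a" "3 \<le> a" "m \<le> n"
    "\<forall>j c. m \<le> j \<and> j < n \<and> c \<in> cells a j \<longrightarrow> z \<notin> middle_square a j c"
  shows "z \<in> carpet a n \<longleftrightarrow> z \<in> carpet a m"
  using carpet_antimono[of a m n] carpet_if_avoids_middle_squares[OF assms(1,2) _ assms(3,4)] assms(2,3)
  by auto

lemma closed_carpet: "1 \<le> a \<Longrightarrow> closed (carpet a n)"
  unfolding carpet_def cell_square_def
  by (intro closed_UN finite_cells ballI closed_Times closed_atLeastAtMost)

lemma closure_carpet: "1 \<le> a \<Longrightarrow> closure (carpet a n) = carpet a n"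
  using closed_carpet closure_closed by blast

lemma bottom_side_in_carpet:
  assumes "odd a" "3 \<le> a" "0 \<le> x" "x \<le> 1"
  shows "(x, 0) \<in> carpet a n"
proof -
  have "(x, 0) \<in> carpet a 0" unfolding carpet_0 using assms by simp
  moreover have "\<forall>j c. 0 \<le> j \<and> j < n \<and> c \<in> cells a j \<longrightarrow> (x, 0) \<notin> middle_square a j c"
    unfolding middle_square_def using rm_lo_pos[OF assms(1,2)] by (auto simp: not_le)
  ultimately show ?thesis using carpet_if_avoids_middle_squares[OF assms(1,2)] by blast
qed

lemma bottom_side_in_frontier_carpet:
  assumes "odd a" "3 \<le> a" "0 \<le> x" "x \<le> 1"
  shows "(x, 0) \<in> frontier (carpet a n)"
proof -
  have "interior (carpet a n) \<subseteq> interior ({0..1} \<times> {0..1})"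
    using assms by (intro interior_mono carpet_subset_unit_square) simp
  also have "\<dots> = {0<..<1} \<times> {0<..<1}" by (simp add: interior_Times)
  finally have "(x, 0) \<notin> interior (carpet a n)" by auto
  then show ?thesis
    using bottom_side_in_carpet[OF assms] closure_subset unfolding frontier_def by blast
qed

lemma peripheral_corners_eq:
  "peripheral_corners a n = (\<Union>j<n. \<Union>c\<in>cells a j.
     {rm_lo a j (fst c), rm_lo a j (fst c) + rm_side a j} \<times> {rm_lo a j (snd c), rm_lo a j (snd c) + rm_side a j})"
  unfolding peripheral_corners_def by blast

lemma finite_peripheral_corners: "1 \<le> a \<Longrightarrow> finite (peripheral_corners a n)"
  unfolding peripheral_corners_eq using finite_cells by auto

section \<open>Grid lattices and the frontier of a carpet\<close>

definition lattice :: "nat \<Rightarrow> real set" where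
  "lattice K = range (\<lambda>i::int. of_int i / real K)"

lemma lattice_iff: "x \<in> lattice K \<longleftrightarrow> (\<exists>i::int. x = of_int i / real K)"
  unfolding lattice_def by auto

lemma lattice_power_iff: "x \<in> lattice (a ^ m) \<longleftrightarrow> (\<exists>i::int. x = of_int i / real a ^ m)"
  by (simp add: lattice_iff)

lemma zero_in_lattice: "0 \<in> lattice K"
  unfolding lattice_iff by (intro exI[of _ 0]) simp

lemma one_in_lattice: "0 < K \<Longrightarrow> 1 \<in> lattice K"
  unfolding lattice_iff by (intro exI[of _ "int K"]) simp

lemma lattice_add: "x \<in> lattice K \<Longrightarrow> y \<in> lattice K \<Longrightarrow> x + y \<in> lattice K"
  unfolding lattice_iff by (metis add_divide_distrib of_int_add)

lemma lattice_diff: "x \<in> lattice K \<Longrightarrow> y \<in> lattice K \<Longrightarrow> x - y \<in> lattice K"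
  unfolding lattice_iff by (metis diff_divide_distrib of_int_diff)

lemma lattice_subset_dvd:
  assumes "K dvd L" "0 < L"
  shows "lattice K \<subseteq> lattice L"
proof
  fix x assume "x \<in> lattice K"
  then obtain i where i: "x = of_int i / real K" by (auto simp: lattice_iff)
  obtain d where L: "L = K * d" using assms(1) by auto
  then have "x = of_int (i * int d) / real L" using assms(2) unfolding i by simp
  then show "x \<in> lattice L" unfolding lattice_iff by blast
qed

lemma countable_lattice: "countable (lattice K)"
  unfolding lattice_def by simp

lemma finite_lattice_unit_interval:
  assumes "0 < K"
  shows "finite (lattice K \<inter> {0..1})"
proof -
  have "lattice K \<inter> {0..1} \<subseteq> (\<lambda>i. of_int i / real K) ` {0..int K}"
  proof
    fix x assume x: "x \<in> lattice K \<inter> {0..1}"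
    then obtain i :: int where i: "x = of_int i / real K" by (auto simp: lattice_iff)
    have "0 \<le> of_int i / real K" "of_int i / real K \<le> 1" using x i by auto
    then have "0 \<le> (of_int i :: real)" "of_int i \<le> real K" using assms by (simp_all add: field_simps)
    then show "x \<in> (\<lambda>i. of_int i / real K) ` {0..int K}" using i by auto
  qed
  then show ?thesis by (rule finite_subset) simp
qed

lemma nat_div_power_in_lattice:
  assumes "j \<le> m" "1 \<le> a"
  shows "real N / real a ^ j \<in> lattice (a ^ m)"
proof -
  have "real a ^ m = real a ^ j * real a ^ (m - j)"
    using assms(1) by (metis le_add_diff_inverse power_add)
  then have "real N / real a ^ j = of_int (int (N * a ^ (m - j))) / real a ^ m"
    using assms(2) by (simp add: field_simps)
  then show ?thesis unfolding lattice_power_iff by blast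
qed

lemma floor_bounds_not_in_lattice:
  assumes "0 < K" "x \<notin> lattice K"
  shows "of_int \<lfloor>x * real K\<rfloor> / real K < x \<and> x < (of_int \<lfloor>x * real K\<rfloor> + 1) / real K"
proof -
  have "x * real K \<noteq> of_int \<lfloor>x * real K\<rfloor>"
  proof
    assume "x * real K = of_int \<lfloor>x * real K\<rfloor>"
    then have "x = of_int \<lfloor>x * real K\<rfloor> / real K" using assms(1) by (simp add: field_simps)
    then show False using assms(2) unfolding lattice_iff by blast
  qed
  then have "of_int \<lfloor>x * real K\<rfloor> < x * real K" "x * real K < of_int \<lfloor>x * real K\<rfloor> + 1"
    by linarith+
  then show ?thesis using assms(1) by (simp add: field_simps)
qed

lemma peripheral_corners_lattice:
  assumes "1 \<le> a" "z \<in> peripheral_corners a m"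
  shows "z \<in> lattice (a ^ m) \<times> lattice (a ^ m)"
proof -
  obtain j c where jc: "j < m" "z \<in> {rm_lo a j (fst c), rm_lo a j (fst c) + rm_side a j} \<times>
      {rm_lo a j (snd c), rm_lo a j (snd c) + rm_side a j}"
    using assms(2) unfolding peripheral_corners_eq by blast
  have "rm_lo a j u \<in> lattice (a ^ m)" for u
    unfolding rm_lo_def using jc(1) assms(1) by (intro nat_div_power_in_lattice) simp_all
  moreover have "rm_lo a j u + rm_side a j \<in> lattice (a ^ m)" for u
    unfolding rm_lo_add_rm_side[OF assms(1)] using jc(1) assms(1) by (intro nat_div_power_in_lattice) simp_all
  ultimately show ?thesis using jc(2) by auto
qed

lemma cell_index_unique:
  fixes A x :: real and i :: int and u :: nat
  assumes "A > 0" "of_int i / A < x" "x \<le> (real u + 1)/A" "real u / A \<le> x" "x < (of_int i + 1)/A"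
  shows "int u = i"
proof -
  have "of_int i < x * A" "x * A \<le> real u + 1" "real u \<le> x * A" "x * A < of_int i + 1"
    using assms by (simp_all add: field_simps)
  then show ?thesis by linarith
qed

definition open_grid_cell :: "nat \<Rightarrow> nat \<Rightarrow> int \<Rightarrow> int \<Rightarrow> pt set" where
  "open_grid_cell a m i l =
     {of_int i / real a ^ m <..< (of_int i + 1) / real a ^ m} \<times>
     {of_int l / real a ^ m <..< (of_int l + 1) / real a ^ m}"

lemma open_open_grid_cell: "open (open_grid_cell a m i l)"
  unfolding open_grid_cell_def by (intro open_Times open_greaterThanLessThan)

lemma closure_open_grid_cell:
  assumes "1 \<le> a"
  shows "closure (open_grid_cell a m i l) =
    {of_int i / real a ^ m .. (of_int i + 1) / real a ^ m} \<times>
    {of_int l / real a ^ m .. (of_int l + 1) / real a ^ m}"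
proof -
  have "of_int k / real a ^ m < (of_int k + 1) / real a ^ m" for k :: int
    using assms by (simp add: divide_strict_right_mono)
  then show ?thesis unfolding open_grid_cell_def closure_Times by simp
qed

lemma open_grid_cell_subset_or_disjoint:
  assumes "1 \<le> a"
  shows "open_grid_cell a m i l \<subseteq> carpet a m \<or> open_grid_cell a m i l \<inter> carpet a m = {}"
proof (cases "open_grid_cell a m i l \<inter> carpet a m = {}")
  case False
  then obtain z u w where z: "z \<in> open_grid_cell a m i l" "(u,w) \<in> cells a m" "z \<in> cell_square a m (u,w)"
    unfolding carpet_def by auto
  have A: "real a ^ m > 0" using assms by simp
  have "int u = i" using cell_index_unique[OF A, of i "fst z" u] z
    unfolding open_grid_cell_def cell_square_def by auto
  moreover have "int w = l" using cell_index_unique[OF A, of l "snd z" w] z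
    unfolding open_grid_cell_def cell_square_def by auto
  ultimately have "open_grid_cell a m i l \<subseteq> cell_square a m (u,w)"
    unfolding open_grid_cell_def cell_square_def by auto
  then show ?thesis using z(2) unfolding carpet_def by blast
qed simp

lemma frontier_carpet_lattice_coordinate:
  assumes "1 \<le> a" "z \<in> frontier (carpet a m)"
  shows "fst z \<in> lattice (a ^ m) \<or> snd z \<in> lattice (a ^ m)"
proof (rule ccontr)
  assume "\<not> ?thesis"
  then have "z \<in> open_grid_cell a m \<lfloor>fst z * real a ^ m\<rfloor> \<lfloor>snd z * real a ^ m\<rfloor>" (is "z \<in> ?G")
    using floor_bounds_not_in_lattice[of "a ^ m"] assms(1)
    unfolding open_grid_cell_def by (auto simp: mem_Times_iff)
  moreover have "z \<in> closure (carpet a m)" "z \<notin> interior (carpet a m)"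
    using assms(2) unfolding frontier_def by auto
  ultimately show False
    using open_grid_cell_subset_or_disjoint[OF assms(1), of m "\<lfloor>fst z * real a ^ m\<rfloor>" "\<lfloor>snd z * real a ^ m\<rfloor>"]
      interior_maximal[OF _ open_open_grid_cell] open_Int_closure_eq_empty[OF open_open_grid_cell]
    by blast
qed

lemma frontierI_closure:
  assumes "z \<in> closure X" "X \<subseteq> S" "z \<in> closure Y" "Y \<inter> S = {}"
  shows "z \<in> frontier S"
proof -
  have "z \<in> closure S" using assms(1,2) closure_mono by blast
  moreover have "closure Y \<subseteq> - interior S"
    using assms(4) closure_mono[of Y "- S"] closure_complement by blast
  ultimately show ?thesis using assms(3) unfolding frontier_def by blast
qed

lemma frontier_swap_image:
  fixes S :: "('a::euclidean_space \<times> 'a) set"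
  shows "frontier (prod.swap ` S) = prod.swap ` frontier S"
proof -
  have lin: "linear (prod.swap :: 'a \<times> 'a \<Rightarrow> _)" by (rule linearI) auto
  have inj: "inj (prod.swap :: 'a \<times> 'a \<Rightarrow> _)" by simp
  show ?thesis unfolding frontier_def
    using closure_injective_linear_image[OF lin inj, of S] interior_injective_linear_image[OF lin inj, of S]
    by (simp add: image_set_diff[OF inj])
qed

lemma swap_in_frontier_carpet: "prod.swap z \<in> frontier (carpet a m) \<longleftrightarrow> z \<in> frontier (carpet a m)"
proof -
  have "prod.swap z \<in> prod.swap ` frontier (carpet a m) \<longleftrightarrow> z \<in> frontier (carpet a m)"
    by (rule inj_image_mem_iff) simp
  then show ?thesis by (simp only: frontier_swap_image[symmetric] swap_carpet)
qed

lemma carpet_meets_grid_cells_beside: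
  assumes a: "1 \<le> a" and pS: "p \<in> carpet a m" and i: "fst p = of_int i / real a ^ m"
    and l: "of_int l / real a ^ m < snd p" "snd p < (of_int l + 1) / real a ^ m"
  shows "open_grid_cell a m (i - 1) l \<inter> carpet a m \<noteq> {} \<or> open_grid_cell a m i l \<inter> carpet a m \<noteq> {}"
proof -
  define A where "A = real a ^ m"
  have A: "A > 0" using a by (simp add: A_def)
  obtain u w where c: "(u,w) \<in> cells a m" "p \<in> cell_square a m (u,w)" using pS unfolding carpet_def by auto
  have cs: "real u / A \<le> fst p" "fst p \<le> (real u + 1) / A" "real w / A \<le> snd p" "snd p \<le> (real w + 1) / A"
    using c(2) unfolding cell_square_def A_def by auto
  have wl: "int w = l" using cell_index_unique[OF A, of l "snd p" w] cs l unfolding A_def by auto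
  have "real u \<le> of_int i" "of_int i \<le> real u + 1" using cs(1,2) A unfolding i A_def by (simp_all add: field_simps)
  then have "int u = i \<or> int u = i - 1" by linarith
  then have ui: "real u = of_int i \<or> real u = of_int i - 1" by (metis of_int_of_nat_eq of_int_diff of_int_1)
  define z where "z = ((real u + 1/2) / A, (real w + 1/2) / A)"
  have "z \<in> cell_square a m (u,w)" unfolding z_def cell_square_def A_def[symmetric] using A
    by (simp add: divide_right_mono)
  then have "z \<in> carpet a m" using c(1) unfolding carpet_def by blast
  moreover have "z \<in> open_grid_cell a m (i - 1) l \<or> z \<in> open_grid_cell a m i l" using ui A wl[symmetric]
    unfolding z_def open_grid_cell_def A_def[symmetric] by (auto simp: divide_strict_right_mono)
  ultimately show ?thesis by blast
qed

lemma grid_cells_beside_frontier_point: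
  assumes a: "1 \<le> a" and pf: "p \<in> frontier (carpet a m)" and i: "fst p = of_int i / real a ^ m"
    and l: "of_int l / real a ^ m < snd p" "snd p < (of_int l + 1) / real a ^ m"
  defines "GL \<equiv> open_grid_cell a m (i - 1) l" and "GR \<equiv> open_grid_cell a m i l"
  shows "(GL \<subseteq> carpet a m \<and> GR \<inter> carpet a m = {}) \<or> (GR \<subseteq> carpet a m \<and> GL \<inter> carpet a m = {})"
proof -
  let ?S = "carpet a m"
  define A where "A = real a ^ m"
  have A: "A > 0" using a by (simp add: A_def)
  have not_both_inside: "\<not> (GL \<subseteq> ?S \<and> GR \<subseteq> ?S)"
  proof
    assume inside: "GL \<subseteq> ?S \<and> GR \<subseteq> ?S"
    define R where "R = {(of_int i - 1) / A <..< (of_int i + 1) / A} \<times> {of_int l / A <..< (of_int l + 1) / A}"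
    have "R \<subseteq> closure GL \<union> closure GR"
      unfolding R_def GL_def GR_def closure_open_grid_cell[OF a] A_def by auto
    also have "\<dots> \<subseteq> ?S" using inside closure_mono closure_carpet[OF a] by (metis Un_least)
    finally have "R \<subseteq> ?S" .
    moreover have "open R" unfolding R_def by (intro open_Times open_greaterThanLessThan)
    moreover have "p \<in> R" using i l A unfolding R_def A_def[symmetric]
      by (cases p) (simp add: divide_strict_right_mono)
    ultimately have "p \<in> interior ?S" using interior_maximal interior_open by blast
    then show False using pf unfolding frontier_def by blast
  qed
  have "p \<in> ?S" using pf closure_carpet[OF a] unfolding frontier_def by auto
  then show ?thesis
    using open_grid_cell_subset_or_disjoint[OF a, of m "i - 1" l] open_grid_cell_subset_or_disjoint[OF a, of m i l]
      not_both_inside carpet_meets_grid_cells_beside[OF a _ i l] unfolding GL_def GR_def by blast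
qed

lemma frontier_carpet_vertical_segment:
  assumes a: "1 \<le> a" and pf: "p \<in> frontier (carpet a m)" and nl: "snd p \<notin> lattice (a ^ m)"
  shows "fst p \<in> lattice (a ^ m) \<and> (\<exists>e>0. \<forall>s. \<bar>s\<bar> < e \<longrightarrow> (fst p, snd p + s) \<in> frontier (carpet a m))"
proof -
  define A where "A = real a ^ m"
  have A: "A > 0" using a by (simp add: A_def)
  have pl: "fst p \<in> lattice (a ^ m)" using frontier_carpet_lattice_coordinate[OF a pf] nl by blast
  then obtain i :: int where i: "fst p = of_int i / A" unfolding lattice_power_iff A_def by auto
  define l where "l = \<lfloor>snd p * A\<rfloor>"
  have l: "of_int l / A < snd p" "snd p < (of_int l + 1) / A"
    using floor_bounds_not_in_lattice[of "a ^ m" "snd p"] nl a unfolding l_def A_def by auto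
  define e where "e = min (snd p - of_int l / A) ((of_int l + 1) / A - snd p)"
  have e: "e > 0" using l unfolding e_def by auto
  have "(fst p, snd p + s) \<in> closure (open_grid_cell a m (i - 1) l) \<inter> closure (open_grid_cell a m i l)"
    if "\<bar>s\<bar> < e" for s
    using that A i unfolding closure_open_grid_cell[OF a] A_def[symmetric] e_def
    by (auto simp: divide_strict_right_mono less_imp_le)
  then have "\<forall>s. \<bar>s\<bar> < e \<longrightarrow> (fst p, snd p + s) \<in> frontier (carpet a m)"
    using grid_cells_beside_frontier_point[OF a pf i[unfolded A_def] l[unfolded A_def]]
    by (metis IntD1 IntD2 Int_commute frontierI_closure)
  then show ?thesis using pl e by blast
qed

lemma frontier_carpet_horizontal_segment:
  assumes a: "1 \<le> a" and pf: "p \<in> frontier (carpet a m)" and nl: "fst p \<notin> lattice (a ^ m)"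
  shows "snd p \<in> lattice (a ^ m) \<and> (\<exists>e>0. \<forall>s. \<bar>s\<bar> < e \<longrightarrow> (fst p + s, snd p) \<in> frontier (carpet a m))"
proof -
  have "prod.swap p \<in> frontier (carpet a m)" using pf swap_in_frontier_carpet by blast
  from frontier_carpet_vertical_segment[OF a this] nl
  obtain e where "snd p \<in> lattice (a ^ m)" "e > 0"
    "\<forall>s. \<bar>s\<bar> < e \<longrightarrow> prod.swap (fst p + s, snd p) \<in> frontier (carpet a m)" by auto
  then show ?thesis using swap_in_frontier_carpet by blast
qed

lemma closed_segment_same_fst:
  fixes x y y' :: real
  shows "closed_segment (x, y) (x, y') = {x} \<times> closed_segment y y'"
proof (intro set_eqI iffI)
  fix z assume "z \<in> closed_segment (x, y) (x, y')"
  then have "(fst z, snd z) \<in> closed_segment (x, y) (x, y')" by simp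
  from closed_segment_PairD[OF this] show "z \<in> {x} \<times> closed_segment y y'" by (simp add: mem_Times_iff)
next
  fix z assume "z \<in> {x} \<times> closed_segment y y'"
  then obtain u where u: "0 \<le> u" "u \<le> 1" "z = (x, (1 - u) * y + u * y')" by (auto simp: in_segment)
  then have "z = (1 - u) *\<^sub>R (x, y) + u *\<^sub>R (x, y')" by (simp add: algebra_simps)
  then show "z \<in> closed_segment (x, y) (x, y')" using u by (auto simp: in_segment)
qed

lemma vertical_wall_iff:
  "vertical_wall S p \<longleftrightarrow> (\<exists>e>0. {fst p} \<times> {snd p .. snd p + e} \<subseteq> frontier S \<or>
                                {fst p} \<times> {snd p - e .. snd p} \<subseteq> frontier S)"
proof -
  have "closed_segment p (p + (0, e)) = {fst p} \<times> {snd p .. snd p + e}"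
    "closed_segment p (p - (0, e)) = {fst p} \<times> {snd p - e .. snd p}" if "0 < e" for e
  proof -
    obtain x y where p: "p = (x, y)" by (cases p)
    show "closed_segment p (p + (0, e)) = {fst p} \<times> {snd p .. snd p + e}"
      "closed_segment p (p - (0, e)) = {fst p} \<times> {snd p - e .. snd p}"
      using that unfolding p by (simp_all add: closed_segment_same_fst closed_segment_eq_real_ivl)
  qed
  then show ?thesis unfolding vertical_wall_def by (metis (no_types, lifting))
qed

lemma vertical_wall_if_segment_in_frontier:
  assumes "e > 0" "\<forall>s. \<bar>s\<bar> < e \<longrightarrow> (fst p, snd p + s) \<in> frontier S"
  shows "vertical_wall S p"
proof -
  have "{fst p} \<times> {snd p .. snd p + e/2} \<subseteq> frontier S"
  proof
    fix z assume "z \<in> {fst p} \<times> {snd p .. snd p + e/2}"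
    then have "z = (fst p, snd p + (snd z - snd p))" "\<bar>snd z - snd p\<bar> < e"
      using assms(1) by (auto simp: mem_Times_iff prod_eq_iff)
    then show "z \<in> frontier S" using assms(2) by metis
  qed
  then show ?thesis unfolding vertical_wall_iff using assms(1) half_gt_zero by blast
qed

lemma vertical_wall_cong_ball:
  assumes "vertical_wall S p" "r > 0" "\<And>z. dist z p < r \<Longrightarrow> z \<in> frontier S \<longleftrightarrow> z \<in> frontier T"
  shows "vertical_wall T p"
proof -
  obtain e where e: "e > 0" "{fst p} \<times> {snd p .. snd p + e} \<subseteq> frontier S \<or>
                             {fst p} \<times> {snd p - e .. snd p} \<subseteq> frontier S"
    using assms(1) unfolding vertical_wall_iff by blast
  define e' where "e' = min e (r/2)"
  have e': "0 < e'" "e' \<le> e" using e(1) assms(2) unfolding e'_def by auto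
  have near: "z \<in> frontier T" if "z \<in> {fst p} \<times> {snd p - e' .. snd p + e'}" "z \<in> frontier S" for z
  proof -
    have "dist z p < r" using that(1) assms(2) unfolding e'_def
      by (cases z, cases p) (auto simp: dist_Pair_Pair dist_real_def)
    then show ?thesis using assms(3) that(2) by blast
  qed
  have shrink: "{fst p} \<times> J \<subseteq> frontier T"
    if "J \<subseteq> {snd p - e' .. snd p + e'} \<inter> J'" "{fst p} \<times> J' \<subseteq> frontier S" for J J'
    using that near by (meson Int_subset_iff Sigma_mono order_refl subset_iff)
  have "{snd p .. snd p + e'} \<subseteq> {snd p - e' .. snd p + e'} \<inter> {snd p .. snd p + e}"
    "{snd p - e' .. snd p} \<subseteq> {snd p - e' .. snd p + e'} \<inter> {snd p - e .. snd p}"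
    using e' by auto
  then have "{fst p} \<times> {snd p .. snd p + e'} \<subseteq> frontier T \<or> {fst p} \<times> {snd p - e' .. snd p} \<subseteq> frontier T"
    using e(2) shrink by blast
  then show ?thesis unfolding vertical_wall_iff using e'(1) by blast
qed

lemma vertical_wall_carpet_lattice:
  assumes "1 \<le> a" "vertical_wall (carpet a m) p"
  shows "fst p \<in> lattice (a ^ m)"
proof -
  obtain e where e: "e > 0" "{fst p} \<times> {snd p .. snd p + e} \<subseteq> frontier (carpet a m) \<or>
                             {fst p} \<times> {snd p - e .. snd p} \<subseteq> frontier (carpet a m)"
    using assms(2) unfolding vertical_wall_iff by blast
  then have "uncountable {snd p .. snd p + e}" "uncountable {snd p - e .. snd p}"
    by (simp_all add: uncountable_closed_interval)
  then obtain I where I: "{fst p} \<times> I \<subseteq> frontier (carpet a m)" "uncountable I"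
    using e(2) by blast
  then have "\<not> I \<subseteq> lattice (a ^ m)" using countable_lattice countable_subset by metis
  then obtain y where y: "y \<in> I" "y \<notin> lattice (a ^ m)" by blast
  then have "(fst p, y) \<in> frontier (carpet a m)" using I(1) by blast
  then show ?thesis using frontier_carpet_lattice_coordinate[OF assms(1)] y(2) by fastforce
qed

lemma open_Int_frontier_Int:
  assumes "open B"
  shows "B \<inter> frontier (B \<inter> X) = B \<inter> frontier X"
proof -
  have "B \<inter> closure (B \<inter> X) = B \<inter> closure X"
    using open_Int_closure_subset[OF assms, of X] closure_mono[of "B \<inter> X" X] by blast
  moreover have "B \<inter> interior (B \<inter> X) = B \<inter> interior X" using assms by (simp add: interior_open)
  ultimately show ?thesis unfolding frontier_def by blast
qed

lemma vertical_wall_open_Int_cong: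
  assumes "open B" "p \<in> B" "S \<inter> B = T \<inter> B" "vertical_wall S p"
  shows "vertical_wall T p"
proof -
  obtain r where r: "r > 0" "ball p r \<subseteq> B" using assms(1,2) open_contains_ball by blast
  have fr: "B \<inter> frontier S = B \<inter> frontier T"
    using open_Int_frontier_Int[OF assms(1), of S] open_Int_frontier_Int[OF assms(1), of T] assms(3)
    by (simp add: Int_commute)
  have "z \<in> frontier S \<longleftrightarrow> z \<in> frontier T" if "dist z p < r" for z
  proof -
    have "z \<in> ball p r" using that by (simp add: dist_commute)
    then have "z \<in> B" using r(2) by blast
    then show ?thesis using fr by blast
  qed
  then show ?thesis using vertical_wall_cong_ball[OF assms(4) r(1)] by blast
qed

section \<open>Collisions\<close>

lemma Inf_approached_outside_finite:
  fixes T F :: "real set"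
  assumes "T \<noteq> {}" "bdd_below T" "Inf T \<notin> T" "finite F" "e > 0"
  shows "\<exists>t \<in> T - F. Inf T < t \<and> t < Inf T + e"
proof -
  define F' where "F' = {t \<in> F. Inf T < t}"
  define d where "d = (if F' = {} then e else min e (Min F' - Inf T))"
  have fin: "finite F'" unfolding F'_def using assms(4) by simp
  have d: "d > 0" "d \<le> e" "\<And>t. t \<in> F' \<Longrightarrow> Inf T + d \<le> t"
    using assms(5) Min_in[OF fin] Min_le[OF fin] unfolding d_def F'_def by fastforce+
  have "Inf T < Inf T + d" using d(1) by simp
  then obtain t where t: "t \<in> T" "t < Inf T + d" using cInf_less_iff[OF assms(1,2), of "Inf T + d"] by blast
  have "Inf T < t" using cInf_lower[OF t(1) assms(2)] t(1) assms(3) by (cases "Inf T = t") auto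
  moreover have "t \<notin> F" using d(3) t(2) calculation unfolding F'_def by fastforce
  ultimately show ?thesis using t d(2) by auto
qed

lemma hit_time_collision:
  fixes S C :: "pt set" and x v :: pt
  assumes S: "closed S" and xS: "x \<in> S" and C: "finite C" and v: "v \<noteq> 0"
    and leaves: "x + 2 *\<^sub>R v \<notin> S"
  defines "h \<equiv> hit_time S C x v"
  shows "h \<ge> 0" "x + h *\<^sub>R v \<in> S"
    "x + h *\<^sub>R v \<notin> C \<Longrightarrow> \<forall>e>0. \<exists>t. h < t \<and> t < h + e \<and> x + t *\<^sub>R v \<notin> S"
proof -
  define T1 where "T1 = {t. 0 < t \<and> x + t *\<^sub>R v \<notin> S}"
  define T2 where "T2 = {t. 0 < t \<and> x + t *\<^sub>R v \<in> C}"
  have hT: "h = Inf (T1 \<union> T2)" unfolding h_def hit_time_def T1_def T2_def ..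
  have ne: "T1 \<union> T2 \<noteq> {}" using leaves unfolding T1_def by (auto intro!: exI[of _ 2])
  have bdd: "bdd_below (T1 \<union> T2)" unfolding T1_def T2_def bdd_below_def by (auto intro!: exI[of _ 0])
  show h0: "h \<ge> 0" unfolding hT by (rule cInf_greatest[OF ne]) (auto simp: T1_def T2_def)
  have below: "x + t *\<^sub>R v \<in> S" if "0 < t" "t < h" for t
    using cInf_lower[OF _ bdd, of t] that unfolding hT T1_def by force
  show pS: "x + h *\<^sub>R v \<in> S"
  proof (cases "h = 0")
    case False
    then have "h \<in> closure {0<..<h}" using h0 by simp
    moreover have "(\<lambda>t. x + t *\<^sub>R v) ` closure {0<..<h} \<subseteq> S"
      using below by (intro image_closure_subset[OF _ S]) (auto intro!: continuous_intros)
    ultimately show ?thesis by blast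
  qed (use xS in simp)
  assume nC: "x + h *\<^sub>R v \<notin> C"
  have "inj (\<lambda>t::real. x + t *\<^sub>R v)" unfolding inj_def using v by (simp add: scaleR_cancel_right)
  then have "finite T2" unfolding T2_def
    using finite_vimageI[OF C] by (auto intro: finite_subset[of _ "(\<lambda>t. x + t *\<^sub>R v) -` C"])
  moreover have "h \<notin> T1 \<union> T2" using pS nC unfolding T1_def T2_def by auto
  ultimately have "\<exists>t \<in> T1 \<union> T2 - T2. h < t \<and> t < h + e" if "e > 0" for e
    using Inf_approached_outside_finite[OF ne bdd _ _ that, folded hT] by blast
  then show "\<forall>e>0. \<exists>t. h < t \<and> t < h + e \<and> x + t *\<^sub>R v \<notin> S"
    unfolding T1_def by blast
qed

lemma leaving_point_in_frontier:
  fixes S :: "pt set" and x v :: pt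
  assumes "closed S" "v \<noteq> 0" "x + h *\<^sub>R v \<in> S" "\<forall>e>0. \<exists>t. h < t \<and> t < h + e \<and> x + t *\<^sub>R v \<notin> S"
  shows "x + h *\<^sub>R v \<in> frontier S"
proof -
  have "x + h *\<^sub>R v \<notin> interior S"
  proof
    assume "x + h *\<^sub>R v \<in> interior S"
    then obtain r where r: "r > 0" "ball (x + h *\<^sub>R v) r \<subseteq> S"
      using open_contains_ball[of "interior S"] interior_subset[of S] by blast
    have nv: "norm v > 0" using assms(2) by simp
    obtain t where t: "h < t" "t < h + r / norm v" "x + t *\<^sub>R v \<notin> S"
      using assms(4) r(1) nv by (metis divide_pos_pos)
    have "dist (x + h *\<^sub>R v) (x + t *\<^sub>R v) = (t - h) * norm v"
      using t(1) by (simp add: dist_norm algebra_simps flip: scaleR_diff_left)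
    also have "\<dots> < r" using t(2) nv by (simp add: field_simps)
    finally have "x + t *\<^sub>R v \<in> ball (x + h *\<^sub>R v) r" by (simp only: mem_ball)
    then show False using r(2) t(3) by blast
  qed
  then show ?thesis using assms(1,3) unfolding frontier_def by (simp add: closure_closed)
qed

lemma leaving_not_parallel_to_frontier_segment:
  fixes S :: "pt set"
  assumes "frontier S \<subseteq> S" "e > 0" "\<forall>s. \<bar>s\<bar> < e \<longrightarrow> p + s *\<^sub>R w \<in> frontier S"
    and "\<forall>d>0. \<exists>t. h < t \<and> t < h + d \<and> x + t *\<^sub>R v \<notin> S" "p = x + h *\<^sub>R v"
  shows "v \<noteq> c *\<^sub>R w"
proof
  assume v: "v = c *\<^sub>R w"
  have c: "\<bar>c\<bar> + 1 > 0" by simp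
  obtain t where t: "h < t" "t < h + e / (\<bar>c\<bar> + 1)" "x + t *\<^sub>R v \<notin> S"
    using assms(2,4) c by (metis divide_pos_pos)
  have "t - h < e / (\<bar>c\<bar> + 1)" using t(2) by simp
  then have "(t - h) * (\<bar>c\<bar> + 1) < e" using pos_less_divide_eq[OF c] by blast
  moreover have "\<bar>(t - h) * c\<bar> = (t - h) * \<bar>c\<bar>" using t(1) by (simp add: abs_mult)
  moreover have "(t - h) * \<bar>c\<bar> \<le> (t - h) * (\<bar>c\<bar> + 1)" using t(1) by simp
  ultimately have "\<bar>(t - h) * c\<bar> < e" by linarith
  moreover have "x + t *\<^sub>R v = p + ((t - h) * c) *\<^sub>R w" using v assms(5) by (simp add: algebra_simps)
  ultimately show False using assms(1,3) t(3) by auto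
qed

section \<open>Grid lines miss the removed squares\<close>

text \<open>With A = 2 mid + 1, the integer 2r - (q - \<epsilon>p) times A equals
  q(2Y - A) - \<epsilon>p(2X - A), whose absolute value is at most p + q < A; so it vanishes,
  although q - \<epsilon>p is odd.\<close>

lemma middle_cell_misses_rational_lines:
  fixes X Y :: real and p q mid :: nat and r \<epsilon> :: int
  assumes X: "real mid \<le> X" "X \<le> real mid + 1" and Y: "real mid \<le> Y" "Y \<le> real mid + 1"
    and pq: "p + q + 2 \<le> 2 * mid + 1" "odd (p + q)" and \<epsilon>: "\<epsilon> = 1 \<or> \<epsilon> = -1"
  shows "real q * Y - of_int \<epsilon> * real p * X \<noteq> real (2 * mid + 1) * of_int r"
proof
  assume eq: "real q * Y - of_int \<epsilon> * real p * X = real (2 * mid + 1) * of_int r"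
  define A where "A = real (2 * mid + 1)"
  define D where "D = 2 * r - (int q - \<epsilon> * int p)"
  have DA: "of_int D * A = real q * (2 * Y - A) - of_int \<epsilon> * real p * (2 * X - A)"
    using eq unfolding D_def A_def by (simp add: algebra_simps)
  have "\<bar>2 * Y - A\<bar> \<le> 1" "\<bar>of_int \<epsilon> * (2 * X - A)\<bar> \<le> 1"
    using X Y \<epsilon> unfolding A_def by auto
  moreover have "\<bar>real q * (2 * Y - A)\<bar> = real q * \<bar>2 * Y - A\<bar>"
    "\<bar>of_int \<epsilon> * real p * (2 * X - A)\<bar> = real p * \<bar>of_int \<epsilon> * (2 * X - A)\<bar>"
    by (simp_all add: abs_mult mult_ac)
  ultimately have bounds: "\<bar>real q * (2 * Y - A)\<bar> \<le> real q" "\<bar>of_int \<epsilon> * real p * (2 * X - A)\<bar> \<le> real p"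
    using mult_left_mono[of _ 1 "real q"] mult_left_mono[of _ 1 "real p"] by auto
  have A: "A > 0" unfolding A_def by simp
  have "\<bar>of_int D\<bar> * A = \<bar>of_int D * A\<bar>" using A by (simp add: abs_mult)
  also have "\<dots> \<le> real q + real p"
    unfolding DA using abs_triangle_ineq4[of "real q * (2 * Y - A)" "of_int \<epsilon> * real p * (2 * X - A)"] bounds
    by linarith
  also have "\<dots> < A" using pq(1) unfolding A_def by simp
  finally have "\<bar>of_int D\<bar> < (1::real)" using A by simp
  then have "D = 0" by linarith
  then show False using pq(2) \<epsilon> unfolding D_def by (elim disjE) (simp_all, presburger+)
qed

text \<open>Scaled by a^(j+1), the middle square of the cell (u, w) becomes
  [au + mid, au + mid + 1] \<times> [aw + mid, aw + mid + 1] and the grid point g becomes a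
  multiple of a, so the line equation turns into q Y - \<epsilon>p X \<equiv> 0 (mod a) for the offsets
  X, Y of z in the middle cell.\<close>

lemma lattice_line_avoids_middle_square:
  fixes p q :: nat and \<epsilon> :: int and g z :: pt
  assumes a: "odd a" "3 \<le> a" and pq: "p + q + 2 \<le> a" "odd (p + q)" and \<epsilon>: "\<epsilon> = 1 \<or> \<epsilon> = -1"
    and g: "g \<in> lattice (a ^ m) \<times> lattice (a ^ m)" and j: "m \<le> j"
    and line: "real q * (snd z - snd g) = of_int \<epsilon> * real p * (fst z - fst g)"
  shows "z \<notin> middle_square a j c"
proof
  assume zin: "z \<in> middle_square a j c"
  obtain u w where c: "c = (u, w)" by force
  have a1: "1 \<le> a" using a by simp
  obtain i1 i2 :: int where i: "fst g = of_int i1 / real a ^ m" "snd g = of_int i2 / real a ^ m"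
    using g unfolding lattice_power_iff mem_Times_iff by blast
  define A where "A = real a ^ Suc j"
  define En where "En = a ^ (j - m)"
  have A: "A > 0" using a1 unfolding A_def by simp
  have "Suc j = m + Suc (j - m)" using j by simp
  then have "A = real a ^ m * (real a * real En)" unfolding A_def En_def by (metis of_nat_power power_Suc power_add)
  then have gA: "fst g * A = real a * of_int i1 * real En" "snd g * A = real a * of_int i2 * real En"
    unfolding i using a1 by (simp_all add: field_simps)
  define X where "X = fst z * A - real a * real u"
  define Y where "Y = snd z * A - real a * real w"
  have "real (a * u + mid a) / A \<le> fst z" "fst z \<le> real (a * u + mid a + 1) / A"
       "real (a * w + mid a) / A \<le> snd z" "snd z \<le> real (a * w + mid a + 1) / A"
    using zin unfolding c middle_square_def rm_lo_add_rm_side[OF a1] A_def by (auto simp: rm_lo_def mem_Times_iff)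
  then have X: "real (mid a) \<le> X" "X \<le> real (mid a) + 1" and Y: "real (mid a) \<le> Y" "Y \<le> real (mid a) + 1"
    using A unfolding X_def Y_def by (simp_all add: field_simps)
  define r where "r = int q * i2 * int En - \<epsilon> * int p * i1 * int En - int q * int w + \<epsilon> * int p * int u"
  have "real q * Y - of_int \<epsilon> * real p * X
      = A * (real q * (snd z - snd g) - of_int \<epsilon> * real p * (fst z - fst g))
        + real q * (snd g * A) - of_int \<epsilon> * real p * (fst g * A)
        - real a * (real q * real w - of_int \<epsilon> * real p * real u)"
    unfolding X_def Y_def by (simp add: algebra_simps)
  also have "\<dots> = real (2 * mid a + 1) * of_int r"
    unfolding line gA r_def mid_bounds(1)[OF a, symmetric] by (simp add: algebra_simps)
  moreover have "p + q + 2 \<le> 2 * mid a + 1" using pq(1) mid_bounds(1)[OF a] by simp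
  ultimately show False using middle_cell_misses_rational_lines[OF X Y _ pq(2) \<epsilon>, of r] by simp
qed

lemma lattice_line_avoids_middle_square':
  fixes p q :: nat and \<epsilon> :: int and g z :: pt
  assumes "odd a" "3 \<le> a" "p + q + 2 \<le> a" "odd (p + q)" "\<epsilon> = 1 \<or> \<epsilon> = -1"
    and "g \<in> lattice (a ^ m) \<times> lattice (a ^ m)" "m \<le> j"
    and "real q * (fst z - fst g) = of_int \<epsilon> * real p * (snd z - snd g)"
  shows "z \<notin> middle_square a j c"
  using lattice_line_avoids_middle_square[OF assms(1-5), of "prod.swap g" m j "prod.swap z" "prod.swap c"] assms(6-8)
  by (simp add: swap_middle_square mem_Times_iff)

definition slope_directions :: "real \<Rightarrow> pt set" where
  "slope_directions \<alpha> = {(1,\<alpha>), (-1,\<alpha>), (1,-\<alpha>), (-1,-\<alpha>), (\<alpha>,1), (-\<alpha>,1), (\<alpha>,-1), (-\<alpha>,-1)}"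

lemma slope_directions_cases:
  assumes "v \<in> slope_directions \<alpha>"
  obtains "v = (1,\<alpha>)" | "v = (-1,\<alpha>)" | "v = (1,-\<alpha>)" | "v = (-1,-\<alpha>)"
    | "v = (\<alpha>,1)" | "v = (-\<alpha>,1)" | "v = (\<alpha>,-1)" | "v = (-\<alpha>,-1)"
  using assms unfolding slope_directions_def by blast

lemma finite_slope_directions: "finite (slope_directions \<alpha>)"
  unfolding slope_directions_def by simp

lemma dir_in_slope_directions: "dir \<alpha> \<in> slope_directions \<alpha>"
  unfolding dir_def slope_directions_def by simp

lemma slope_directions_nonzero: "v \<in> slope_directions \<alpha> \<Longrightarrow> v \<noteq> 0"
  by (erule slope_directions_cases) (auto simp: zero_prod_def)

lemma swap_slope_directions: "prod.swap v \<in> slope_directions \<alpha> \<longleftrightarrow> v \<in> slope_directions \<alpha>"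
  unfolding slope_directions_def by (cases v) auto

lemma reflect_slope_directions:
  "v \<in> slope_directions \<alpha> \<Longrightarrow> (- fst v, snd v) \<in> slope_directions \<alpha>"
  by (erule slope_directions_cases; simp add: slope_directions_def)

lemma reflect_dir_slope_directions: "v \<in> slope_directions \<alpha> \<Longrightarrow> reflect_dir S p v \<in> slope_directions \<alpha>"
  unfolding reflect_dir_def by (erule slope_directions_cases; simp add: slope_directions_def)

lemma slope_directions_leave_unit_square:
  "x \<in> {0..1} \<times> {0..1} \<Longrightarrow> v \<in> slope_directions \<alpha> \<Longrightarrow> x + 2 *\<^sub>R v \<notin> {0..1} \<times> {0..1}"
  by (erule slope_directions_cases; cases x; simp)

text \<open>For p = 0 the entries q/p are 0 by division by zero; this is exactly the ratio
  snd v / fst v of the directions (0, \<plusminus>1).\<close>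

lemma slope_directions_ratio:
  fixes p q :: nat
  assumes "v \<in> slope_directions (real p / real q)" "1 \<le> q"
  shows "snd v / fst v \<in> {real p / real q, - (real p / real q), real q / real p, - (real q / real p)}"
  using assms(1) by (rule slope_directions_cases) (use assms(2) in auto)

lemma slope_directions_line:
  fixes p q :: nat
  assumes "v \<in> slope_directions (real p / real q)" "1 \<le> q"
  obtains \<epsilon> :: int where "\<epsilon> = 1 \<or> \<epsilon> = -1"
    "real q * snd v = of_int \<epsilon> * real p * fst v \<or> real q * fst v = of_int \<epsilon> * real p * snd v"
proof -
  have q: "real q \<noteq> 0" using assms(2) by simp
  from assms(1) show ?thesis
    by (rule slope_directions_cases) (use that[of 1] that[of "-1"] q in auto)
qed

lemma lattice_ray_avoids_middle_square:
  fixes p q :: nat and g :: pt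
  assumes "odd a" "3 \<le> a" "1 \<le> q" "p + q + 2 \<le> a" "odd (p + q)"
    and "v \<in> slope_directions (real p / real q)" "g \<in> lattice (a ^ m) \<times> lattice (a ^ m)" "m \<le> j"
  shows "g + t *\<^sub>R v \<notin> middle_square a j c"
proof -
  obtain \<epsilon> :: int where \<epsilon>: "\<epsilon> = 1 \<or> \<epsilon> = -1"
    "real q * snd v = of_int \<epsilon> * real p * fst v \<or> real q * fst v = of_int \<epsilon> * real p * snd v"
    using slope_directions_line[OF assms(6,3)] by blast
  from \<epsilon>(2) have "real q * (t * snd v) = of_int \<epsilon> * real p * (t * fst v) \<or>
                  real q * (t * fst v) = of_int \<epsilon> * real p * (t * snd v)"
    by (metis mult.left_commute)
  then show ?thesis
    using lattice_line_avoids_middle_square[OF assms(1,2,4,5) \<epsilon>(1) assms(7,8), of "g + t *\<^sub>R v" c]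
      lattice_line_avoids_middle_square'[OF assms(1,2,4,5) \<epsilon>(1) assms(7,8), of "g + t *\<^sub>R v" c]
    by auto
qed

section \<open>The billiard on grid lines\<close>

lemma A_set_elim:
  assumes "\<alpha> \<in> A_set (a - 2)" "3 \<le> a"
  obtains p q :: nat where "\<alpha> = real p / real q" "1 \<le> q" "p + q + 2 \<le> a" "odd (p + q)"
proof (cases "a - 2 = 1")
  case True
  then show ?thesis using assms(1) that[of 0 1] unfolding A_set_def by simp
next
  case False
  then obtain p q where "\<alpha> = real p / real q" "p + q \<le> a - 2" "p < q" "odd (p + q)"
    using assms(1) unfolding A_set_def by auto
  then show ?thesis using that[of p q] assms(2) by simp
qed

locale rational_slope_billiard =
  fixes a m p q :: nat
  assumes odd_a: "odd a" and a_ge_3: "3 \<le> a" and q_ge_1: "1 \<le> q" and slope_bound: "p + q + 2 \<le> a"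
    and odd_slope: "odd (p + q)"
begin

abbreviation "\<alpha> \<equiv> real p / real q"

lemma one_le_a: "1 \<le> a"
  using a_ge_3 by simp

definition on_grid_line :: "pt \<Rightarrow> pt \<Rightarrow> bool" where
  "on_grid_line x v \<longleftrightarrow> v \<in> slope_directions \<alpha> \<and>
     (\<exists>g \<in> lattice (a ^ m) \<times> lattice (a ^ m). \<exists>t. x = g + t *\<^sub>R v)"

lemma on_grid_line_translate: "on_grid_line x v \<Longrightarrow> on_grid_line (x + s *\<^sub>R v) v"
  unfolding on_grid_line_def by (metis add.assoc scaleR_left_distrib)

lemma on_grid_lineI_lattice:
  "v \<in> slope_directions \<alpha> \<Longrightarrow> x \<in> lattice (a ^ m) \<times> lattice (a ^ m) \<Longrightarrow> on_grid_line x v"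
  unfolding on_grid_line_def by (metis add.right_neutral scaleR_zero_left)

lemma swap_on_grid_line: "on_grid_line (prod.swap x) (prod.swap v) \<longleftrightarrow> on_grid_line x v"
proof -
  let ?L = "lattice (a ^ m) \<times> lattice (a ^ m)"
  have "prod.swap x = g + t *\<^sub>R prod.swap v \<longleftrightarrow> x = prod.swap g + t *\<^sub>R v" for g t
    by (cases x, cases g, cases v) auto
  moreover have "prod.swap g \<in> ?L \<longleftrightarrow> g \<in> ?L" for g by (cases g) auto
  ultimately have "(\<exists>g\<in>?L. \<exists>t. prod.swap x = g + t *\<^sub>R prod.swap v) \<longleftrightarrow> (\<exists>g\<in>?L. \<exists>t. x = g + t *\<^sub>R v)"
    by (metis swap_swap)
  then show ?thesis unfolding on_grid_line_def swap_slope_directions by blast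
qed

lemma on_grid_line_not_in_middle_square: "on_grid_line x v \<Longrightarrow> m \<le> j \<Longrightarrow> x \<notin> middle_square a j c"
  unfolding on_grid_line_def using lattice_ray_avoids_middle_square[OF odd_a a_ge_3 q_ge_1 slope_bound odd_slope] by blast

lemma on_grid_line_carpet_iff: "on_grid_line x v \<Longrightarrow> m \<le> n \<Longrightarrow> x \<in> carpet a n \<longleftrightarrow> x \<in> carpet a m"
  using carpet_iff_if_avoids_middle_squares[OF odd_a a_ge_3] on_grid_line_not_in_middle_square by blast

lemma on_grid_line_peripheral_corners_iff:
  assumes "on_grid_line x v" "m \<le> n"
  shows "x \<in> peripheral_corners a n \<longleftrightarrow> x \<in> peripheral_corners a m"
proof -
  let ?corners = "\<lambda>j c. {rm_lo a j (fst c), rm_lo a j (fst c) + rm_side a j} \<times>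
                           {rm_lo a j (snd c), rm_lo a j (snd c) + rm_side a j}"
  have "x \<notin> ?corners j c" if "m \<le> j" for j c
    using on_grid_line_not_in_middle_square[OF assms(1) that, of c]
    unfolding middle_square_def rm_side_def by auto
  then have low: "j < m" if "x \<in> ?corners j c" for j c
    using that not_le by blast
  show ?thesis
  proof
    assume "x \<in> peripheral_corners a n"
    then obtain j c where "j < n" "c \<in> cells a j" "x \<in> ?corners j c"
      unfolding peripheral_corners_eq by blast
    then show "x \<in> peripheral_corners a m" using low unfolding peripheral_corners_eq by blast
  next
    assume "x \<in> peripheral_corners a m"
    then obtain j c where "j < m" "c \<in> cells a j" "x \<in> ?corners j c"
      unfolding peripheral_corners_eq by blast
    then show "x \<in> peripheral_corners a n" using assms(2) unfolding peripheral_corners_eq by auto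
  qed
qed

lemma on_grid_line_vertical_wall_iff:
  assumes "on_grid_line x v" "m \<le> n"
  shows "vertical_wall (carpet a n) x \<longleftrightarrow> vertical_wall (carpet a m) x"
proof -
  define U where "U = (\<Union>j\<in>{m..<n}. \<Union>c\<in>cells a j. middle_square a j c)"
  have "closed U" unfolding U_def
    by (intro closed_UN ballI finite_atLeastLessThan finite_cells[OF one_le_a] closed_middle_square)
  moreover have "x \<notin> U" unfolding U_def using on_grid_line_not_in_middle_square[OF assms(1)] by auto
  moreover have "z \<in> carpet a n \<longleftrightarrow> z \<in> carpet a m" if "z \<notin> U" for z
    using that by (intro carpet_iff_if_avoids_middle_squares[OF odd_a a_ge_3 assms(2)]) (auto simp: U_def)
  then have "carpet a n \<inter> - U = carpet a m \<inter> - U" by blast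
  ultimately show ?thesis
    using vertical_wall_open_Int_cong[of "- U" x "carpet a n" "carpet a m"]
      vertical_wall_open_Int_cong[of "- U" x "carpet a m" "carpet a n"] by auto
qed

definition billiard_step :: "nat \<Rightarrow> pt \<times> pt \<Rightarrow> pt \<times> pt" where
  "billiard_step n s = (let (x, v) = s in
      if x \<in> peripheral_corners a n then (x, v)
      else (let y = x + hit_time (carpet a n) (peripheral_corners a n) x v *\<^sub>R v
            in (y, reflect_dir (carpet a n) y v)))"

lemma orbit_seq_Suc: "orbit_seq a n x0 v0 (Suc j) = billiard_step n (orbit_seq a n x0 v0 j)"
  by (simp only: orbit_seq.simps(2) billiard_step_def)

lemma billiard_step_level_independent:
  assumes "on_grid_line x v" "m \<le> n"
  shows "billiard_step n (x, v) = billiard_step m (x, v)"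
proof -
  have "{t. 0 < t \<and> x + t *\<^sub>R v \<notin> carpet a n} = {t. 0 < t \<and> x + t *\<^sub>R v \<notin> carpet a m}"
    "{t. 0 < t \<and> x + t *\<^sub>R v \<in> peripheral_corners a n} = {t. 0 < t \<and> x + t *\<^sub>R v \<in> peripheral_corners a m}"
    using on_grid_line_carpet_iff[OF on_grid_line_translate[OF assms(1)] assms(2)]
      on_grid_line_peripheral_corners_iff[OF on_grid_line_translate[OF assms(1)] assms(2)] by blast+
  then have "hit_time (carpet a n) (peripheral_corners a n) x v = hit_time (carpet a m) (peripheral_corners a m) x v"
    unfolding hit_time_def by simp
  moreover have "reflect_dir (carpet a n) (x + s *\<^sub>R v) v = reflect_dir (carpet a m) (x + s *\<^sub>R v) v" for s
    unfolding reflect_dir_def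
    using on_grid_line_vertical_wall_iff[OF on_grid_line_translate[OF assms(1)] assms(2)] by presburger
  ultimately show ?thesis
    unfolding billiard_step_def using on_grid_line_peripheral_corners_iff[OF assms] by (simp add: Let_def)
qed

text \<open>Collision points lie on a grid line and on a wall x \<in> a^-m \<int> or y \<in> a^-m \<int>;
  their other coordinate then lies in (1/K)\<int> (the factor max p 1 handles p = 0).\<close>

definition K :: nat where
  "K = q * max p 1 * a ^ m"

lemma K_pos: "0 < K"
  unfolding K_def using q_ge_1 one_le_a by simp

lemma grid_subset_lattice_K: "lattice (a ^ m) \<subseteq> lattice K"
  by (rule lattice_subset_dvd[OF _ K_pos]) (simp add: K_def)

lemma slope_ratio_times_grid_in_lattice_K:
  assumes r: "r \<in> {\<alpha>, - \<alpha>, real q / real p, - (real q / real p)}" and d: "d \<in> lattice (a ^ m)"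
  shows "r * d \<in> lattice K"
proof -
  obtain i :: int where i: "d = of_int i / real a ^ m" using d unfolding lattice_power_iff by blast
  have neg: "- x \<in> lattice K" if "x \<in> lattice K" for x
    using lattice_diff[OF zero_in_lattice that] by simp
  have "\<alpha> * d \<in> lattice (q * a ^ m)" unfolding i lattice_iff by (intro exI[of _ "int p * i"]) simp
  moreover have "lattice (q * a ^ m) \<subseteq> lattice K"
    by (rule lattice_subset_dvd[OF _ K_pos]) (simp add: K_def)
  ultimately have \<alpha>d: "\<alpha> * d \<in> lattice K" by blast
  have qd: "real q / real p * d \<in> lattice K"
  proof (cases "p = 0")
    case False
    have "real q / real p * d \<in> lattice (p * a ^ m)" unfolding i lattice_iff by (intro exI[of _ "int q * i"]) simp
    moreover have "lattice (p * a ^ m) \<subseteq> lattice K"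
      using False by (intro lattice_subset_dvd[OF _ K_pos]) (simp add: K_def max_def)
    ultimately show ?thesis by blast
  qed (simp add: zero_in_lattice)
  from r show ?thesis using neg[OF \<alpha>d] neg[OF qd] \<alpha>d qd by auto
qed

lemma on_grid_line_snd_in_lattice_K:
  assumes "on_grid_line x v" "fst x \<in> lattice (a ^ m)" "fst v \<noteq> 0"
  shows "snd x \<in> lattice K"
proof -
  obtain g t where v: "v \<in> slope_directions \<alpha>" and g: "g \<in> lattice (a ^ m) \<times> lattice (a ^ m)"
    and x: "x = g + t *\<^sub>R v"
    using assms(1) unfolding on_grid_line_def by blast
  have "t * fst v \<in> lattice (a ^ m)"
    using lattice_diff[OF assms(2), of "fst g"] g unfolding x by auto
  then have "snd v / fst v * (t * fst v) \<in> lattice K"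
    by (rule slope_ratio_times_grid_in_lattice_K[OF slope_directions_ratio[OF v q_ge_1]])
  moreover have "snd g \<in> lattice K" using g grid_subset_lattice_K by auto
  moreover have "snd x = snd g + snd v / fst v * (t * fst v)" using assms(3) unfolding x by simp
  ultimately show ?thesis using lattice_add by simp
qed

lemma on_grid_line_fst_in_lattice_K:
  assumes "on_grid_line x v" "snd x \<in> lattice (a ^ m)" "snd v \<noteq> 0"
  shows "fst x \<in> lattice K"
  using on_grid_line_snd_in_lattice_K[of "prod.swap x" "prod.swap v"] assms swap_on_grid_line by simp

lemma on_grid_line_reflect_fst:
  assumes "on_grid_line x v" "fst x \<in> lattice (a ^ m)"
  shows "on_grid_line x (- fst v, snd v)"
proof -
  obtain g t where v: "v \<in> slope_directions \<alpha>" and g: "g \<in> lattice (a ^ m) \<times> lattice (a ^ m)"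
    and x: "x = g + t *\<^sub>R v"
    using assms(1) unfolding on_grid_line_def by blast
  define c where "c = fst x + (fst x - fst g)"
  have "c \<in> lattice (a ^ m)" unfolding c_def using g by (intro lattice_add lattice_diff assms(2)) auto
  moreover have "x = (c, snd g) + t *\<^sub>R (- fst v, snd v)" unfolding c_def x by (simp add: prod_eq_iff)
  ultimately show ?thesis
    unfolding on_grid_line_def using reflect_slope_directions[OF v] g by (auto simp: mem_Times_iff)
qed

lemma on_grid_line_reflect_snd:
  assumes "on_grid_line x v" "snd x \<in> lattice (a ^ m)"
  shows "on_grid_line x (fst v, - snd v)"
  using on_grid_line_reflect_fst[of "prod.swap x" "prod.swap v"] assms swap_on_grid_line[of x]
    swap_on_grid_line[of x "(fst v, - snd v)"] by simp

definition orbit_invariant :: "pt \<times> pt \<Rightarrow> bool" where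
  "orbit_invariant s \<longleftrightarrow>
     on_grid_line (fst s) (snd s) \<and> fst s \<in> carpet a m \<and> fst s \<in> lattice K \<times> lattice K"

lemma reflection_at_frontier_on_grid_line:
  assumes line: "on_grid_line y v" and pf: "y \<in> frontier (carpet a m)"
    and off_grid: "\<not> (fst y \<in> lattice (a ^ m) \<and> snd y \<in> lattice (a ^ m))"
    and leaves: "\<forall>e>0. \<exists>t. h < t \<and> t < h + e \<and> x + t *\<^sub>R v \<notin> carpet a m" and y: "y = x + h *\<^sub>R v"
  shows "on_grid_line y (reflect_dir (carpet a m) y v) \<and> y \<in> lattice K \<times> lattice K"
proof -
  let ?S = "carpet a m"
  have frS: "frontier ?S \<subseteq> ?S" using closed_carpet[OF one_le_a] by (simp add: frontier_subset_closed)
  have not_Q_corner: "\<not> (y = (0,0) \<or> y = (1,1) \<or> y = (1,0) \<or> y = (0,1))"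
    using off_grid zero_in_lattice one_in_lattice[of "a ^ m"] one_le_a by auto
  from frontier_carpet_lattice_coordinate[OF one_le_a pf] off_grid
  consider "fst y \<in> lattice (a ^ m)" "snd y \<notin> lattice (a ^ m)"
    | "snd y \<in> lattice (a ^ m)" "fst y \<notin> lattice (a ^ m)" by blast
  then show ?thesis
  proof cases
    case 1
    obtain e where e: "e > 0" "\<forall>s. \<bar>s\<bar> < e \<longrightarrow> (fst y, snd y + s) \<in> frontier ?S"
      using frontier_carpet_vertical_segment[OF one_le_a pf 1(2)] by blast
    have "y + s *\<^sub>R (0, 1) = (fst y, snd y + s)" for s by (simp add: prod_eq_iff)
    then have "v \<noteq> snd v *\<^sub>R (0, 1)"
      using leaving_not_parallel_to_frontier_segment[OF frS e(1) _ leaves y, of "(0, 1)"] e(2) by simp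
    then have "fst v \<noteq> 0" by (auto simp: prod_eq_iff)
    moreover have "reflect_dir ?S y v = (- fst v, snd v)"
      using vertical_wall_if_segment_in_frontier[OF e] not_Q_corner unfolding reflect_dir_def by simp
    ultimately show ?thesis
      using on_grid_line_reflect_fst[OF line 1(1)] on_grid_line_snd_in_lattice_K[OF line 1(1)]
        grid_subset_lattice_K 1(1) by (auto simp: mem_Times_iff)
  next
    case 2
    obtain e where e: "e > 0" "\<forall>s. \<bar>s\<bar> < e \<longrightarrow> (fst y + s, snd y) \<in> frontier ?S"
      using frontier_carpet_horizontal_segment[OF one_le_a pf 2(2)] by blast
    have "y + s *\<^sub>R (1, 0) = (fst y + s, snd y)" for s by (simp add: prod_eq_iff)
    then have "v \<noteq> fst v *\<^sub>R (1, 0)"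
      using leaving_not_parallel_to_frontier_segment[OF frS e(1) _ leaves y, of "(1, 0)"] e(2) by simp
    then have "snd v \<noteq> 0" by (auto simp: prod_eq_iff)
    moreover have "reflect_dir ?S y v = (fst v, - snd v)"
      using vertical_wall_carpet_lattice[OF one_le_a, of m y] 2(2) not_Q_corner unfolding reflect_dir_def by auto
    ultimately show ?thesis
      using on_grid_line_reflect_snd[OF line 2(1)] on_grid_line_fst_in_lattice_K[OF line 2(1)]
        grid_subset_lattice_K 2(1) by (auto simp: mem_Times_iff)
  qed
qed

lemma billiard_step_invariant:
  assumes "orbit_invariant (x, v)"
  shows "orbit_invariant (billiard_step m (x, v))"
proof (cases "x \<in> peripheral_corners a m")
  case False
  let ?S = "carpet a m" and ?C = "peripheral_corners a m"
  have line: "on_grid_line x v" and xS: "x \<in> ?S" using assms unfolding orbit_invariant_def by auto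
  have v: "v \<in> slope_directions \<alpha>" using line unfolding on_grid_line_def by blast
  define h where "h = hit_time ?S ?C x v"
  define y where "y = x + h *\<^sub>R v"
  have step: "billiard_step m (x, v) = (y, reflect_dir ?S y v)"
    unfolding billiard_step_def y_def h_def using False by (simp add: Let_def)
  have "x + 2 *\<^sub>R v \<notin> ?S"
    using slope_directions_leave_unit_square[OF _ v, of x] carpet_subset_unit_square[OF one_le_a] xS by blast
  note hit = hit_time_collision[OF closed_carpet[OF one_le_a] xS finite_peripheral_corners[OF one_le_a, of m]
      slope_directions_nonzero[OF v] this, folded h_def y_def]
  have y_line: "on_grid_line y v" unfolding y_def by (rule on_grid_line_translate[OF line])
  have refl_dir: "reflect_dir ?S y v \<in> slope_directions \<alpha>" by (rule reflect_dir_slope_directions[OF v])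
  have "on_grid_line y (reflect_dir ?S y v) \<and> y \<in> lattice K \<times> lattice K"
  proof (cases "fst y \<in> lattice (a ^ m) \<and> snd y \<in> lattice (a ^ m)")
    case True
    then show ?thesis using on_grid_lineI_lattice[OF refl_dir, of y] grid_subset_lattice_K by (auto simp: mem_Times_iff)
  next
    case off_grid: False
    then have "y \<notin> ?C" using peripheral_corners_lattice[OF one_le_a, of y m] by (auto simp: mem_Times_iff)
    then have leaves: "\<forall>e>0. \<exists>t. h < t \<and> t < h + e \<and> x + t *\<^sub>R v \<notin> ?S"
      using hit(3) unfolding y_def by blast
    have "y \<in> frontier ?S" unfolding y_def
      using leaving_point_in_frontier[OF closed_carpet[OF one_le_a] slope_directions_nonzero[OF v] _ leaves]
        hit(2) unfolding y_def .
    then show ?thesis using reflection_at_frontier_on_grid_line[OF y_line _ off_grid leaves y_def] by blast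
  qed
  then show ?thesis unfolding step orbit_invariant_def using hit(2) by simp
qed (use assms in \<open>simp add: billiard_step_def\<close>)

lemma orbit_seq_level_independent:
  assumes "orbit_invariant (x0, v0)" "m \<le> n"
  shows "orbit_seq a n x0 v0 = orbit_seq a m x0 v0" "orbit_invariant (orbit_seq a m x0 v0 j)"
proof -
  have "orbit_seq a n x0 v0 j = orbit_seq a m x0 v0 j \<and> orbit_invariant (orbit_seq a m x0 v0 j)" for j
  proof (induction j)
    case (Suc j)
    obtain x v where xv: "orbit_seq a m x0 v0 j = (x, v)" by (cases "orbit_seq a m x0 v0 j") auto
    then have "orbit_invariant (x, v)" "orbit_seq a n x0 v0 j = (x, v)" using Suc by auto
    then show ?case
      unfolding orbit_seq_Suc xv
      using billiard_step_level_independent[OF _ assms(2)] billiard_step_invariant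
      by (simp add: orbit_invariant_def)
  qed (use assms(1) in simp)
  then show "orbit_seq a n x0 v0 = orbit_seq a m x0 v0" "orbit_invariant (orbit_seq a m x0 v0 j)"
    by auto
qed

lemma finite_orbit:
  assumes "orbit_invariant (x0, v0)"
  shows "finite (range (orbit_seq a m x0 v0))"
proof (rule finite_subset)
  show "range (orbit_seq a m x0 v0) \<subseteq>
      ((lattice K \<inter> {0..1}) \<times> (lattice K \<inter> {0..1})) \<times> slope_directions \<alpha>"
  proof
    fix s assume "s \<in> range (orbit_seq a m x0 v0)"
    then have "orbit_invariant s" using orbit_seq_level_independent(2)[OF assms order_refl] by auto
    then have "fst s \<in> (lattice K \<inter> {0..1}) \<times> (lattice K \<inter> {0..1})" "snd s \<in> slope_directions \<alpha>"
      using carpet_subset_unit_square[OF one_le_a, of m] unfolding orbit_invariant_def on_grid_line_def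
      by (auto simp: mem_Times_iff)
    then show "s \<in> ((lattice K \<inter> {0..1}) \<times> (lattice K \<inter> {0..1})) \<times> slope_directions \<alpha>"
      by (simp add: mem_Times_iff)
  qed
  show "finite (((lattice K \<inter> {0..1}) \<times> (lattice K \<inter> {0..1})) \<times> slope_directions \<alpha>)"
    using finite_lattice_unit_interval[OF K_pos] finite_slope_directions by simp
qed

lemma bottom_orbits_constant_from_level_m:
  assumes "k \<le> a ^ m - 1"
  defines "x0 \<equiv> (real k / real a ^ m, 0)"
  shows "compatible_closed_seq a m (\<lambda>n. x0) \<alpha> \<and> constant_orbit_seq a m (\<lambda>n. x0) \<alpha>"
proof -
  have "0 < a ^ m" using one_le_a by simp
  then have "k < a ^ m" using assms by linarith
  then have "real k \<le> real a ^ m" by (metis less_imp_le of_nat_le_iff of_nat_power)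
  moreover have "0 < real a ^ m" using one_le_a by simp
  ultimately have x0_unit: "0 \<le> real k / real a ^ m" "real k / real a ^ m \<le> 1"
    by (simp_all only: divide_le_eq_1_pos) simp
  have "x0 \<in> lattice (a ^ m) \<times> lattice (a ^ m)"
    unfolding x0_def using zero_in_lattice by (auto simp: lattice_power_iff intro: exI[of _ "int k"])
  then have "orbit_invariant (x0, dir \<alpha>)"
    unfolding orbit_invariant_def x0_def
    using on_grid_lineI_lattice[OF dir_in_slope_directions] bottom_side_in_carpet[OF odd_a a_ge_3 x0_unit]
      grid_subset_lattice_K by (auto simp: mem_Times_iff)
  note same = orbit_seq_level_independent(1)[OF this] and fin = finite_orbit[OF this]
  have closed: "closed_orbit a n x0 \<alpha>" if "m \<le> n" for n
    unfolding closed_orbit_def orbit_def same[OF that] using fin .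
  have path: "orbit_path a n x0 \<alpha> = orbit_path a m x0 \<alpha>" if "m \<le> n" for n
    unfolding orbit_path_def same[OF that] ..
  \<comment> \<open>all tables use the same initial point, so a degenerate segment witnesses compatibility\<close>
  have compat: "compatible a n x0 x0 \<alpha>" for n
    using bottom_side_in_frontier_carpet[OF odd_a a_ge_3 x0_unit] unfolding x0_def compatible_def
    by (intro exI[of _ x0] exI[of _ 0]) (simp add: x0_def)
  have "orbit_path a (Suc n) x0 \<alpha> = orbit_path a n x0 \<alpha>" if "m \<le> n" for n
    using path[OF that] path[OF le_SucI[OF that]] by (simp only:)
  then show ?thesis
    unfolding compatible_closed_seq_def constant_orbit_seq_def using closed compat by blast
qed

end

theorem proposition4p3:
  fixes a m k :: nat and \<alpha> :: real
  assumes "odd a" and "3 \<le> a" and "\<alpha> \<in> A_set (a - 2)"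
    and "1 \<le> k" and "k \<le> a ^ m - 1"
  shows "\<exists>N. compatible_closed_seq a N (\<lambda>n. (real k / real a ^ m, 0)) \<alpha> \<and>
             constant_orbit_seq a N (\<lambda>n. (real k / real a ^ m, 0)) \<alpha>"
proof -
  obtain p q :: nat where \<alpha>: "\<alpha> = real p / real q" "1 \<le> q" "p + q + 2 \<le> a" "odd (p + q)"
    using A_set_elim[OF assms(3,2)] .
  interpret rational_slope_billiard a m p q
    using assms(1,2) \<alpha>(2-4) by unfold_locales
  show ?thesis using bottom_orbits_constant_from_level_m[OF assms(5)] unfolding \<alpha>(1) by blast
qed

end
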